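(* Let $\Gamma$ be a numerical semigroup with multiplicity $e$ and conductor $c$, let $r>0$ be an integer and $m\in\Gamma$. Let $S_r(m)=\{(m_1,\dots,m_r)\in\Gamma^r: m\le m_1<\cdots<m_r\}$. Set $u=\max\{m+e-1,c+e-1\}$ and define finite sets $F_k(m)\subseteq S_k(m)$ recursively by $F_1(m)=\{m,m+1,\dots,u\}\cap\Gamma$ and, for $k\ge2$, \[ F_k(m)=\{(m_1,\dots,m_k): (m_1,\dots,m_{k-1})\in F_{k-1}(m),\ m_k\in X(m;m_1,\dots,m_{k-1})\}, \] where \[ X(m;m_1,\dots,m_{k-1})=\Big(\big(\{m_{k-1}+1,\dots,u\}\cap\Gamma\big)\cup\{m_1+e,\dots,m_{k-1}+e\}\Big)\setminus\{0,1,\dots,m_{k-1}\}. \] Then \[ \min\{|D_\Gamma(x_1,\dots,x_r)| : (x_1,\dots,x_r)\in F_r(m)\}=\min\{|D_\Gamma(p_1,\dots,p_r)|:(p_1,\dots,p_r)\in S_r(m)\}. \] In particular the right-hand side, which is the $r$-th Feng-Rao distance $\delta^r_\Gamma(m)$, is a minimum over a finite, recursively constructible set.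
   Context: A numerical semigroup is a subset $\Gamma\subseteq\mathbb N$ containing $0$, closed under addition, with finite complement; multiplicity = least positive element; conductor = least $c$ with $c+\mathbb N\subseteq\Gamma$. For $x\in\mathbb Z$, $D_\Gamma(x)=\{s\in\Gamma:x-s\in\Gamma\}$ and $D_\Gamma(x_1,\dots,x_r)=D_\Gamma(x_1)\cup\cdots\cup D_\Gamma(x_r)$. The $r$-th Feng-Rao distance is $\delta^r_\Gamma(m)=\min\{|D_\Gamma(m_1,\dots,m_r)|: m\le m_1<\cdots<m_r,\ m_i\in\Gamma\}$. *)

theory Defs
  imports Main
begin

definition numerical_semigroup :: "nat set \<Rightarrow> bool" where
  "numerical_semigroup G \<longleftrightarrow> 0 \<in> G \<and> (\<forall>a\<in>G. \<forall>b\<in>G. a + b \<in> G) \<and> finite (UNIV - G)"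

definition multiplicity_ns :: "nat set \<Rightarrow> nat" where
  "multiplicity_ns G = (LEAST x. 0 < x \<and> x \<in> G)"

definition conductor_ns :: "nat set \<Rightarrow> nat" where
  "conductor_ns G = (LEAST c. \<forall>n. c \<le> n \<longrightarrow> n \<in> G)"

text \<open>D_Gamma(x) = {s in Gamma. x - s in Gamma} (integer subtraction; for s > x the
  difference is negative hence not in Gamma, so we require s \<le> x).\<close>
definition Dset :: "nat set \<Rightarrow> nat \<Rightarrow> nat set" where
  "Dset G x = {s \<in> G. s \<le> x \<and> x - s \<in> G}"

definition Dlist :: "nat set \<Rightarrow> nat list \<Rightarrow> nat set" where
  "Dlist G xs = (\<Union>x\<in>set xs. Dset G x)"

definition S_tuples :: "nat set \<Rightarrow> nat \<Rightarrow> nat \<Rightarrow> nat list set" where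
  "S_tuples G r m = {xs. length xs = r \<and> set xs \<subseteq> G \<and> sorted_wrt (<) xs \<and> (\<forall>x\<in>set xs. m \<le> x)}"

definition feng_rao :: "nat set \<Rightarrow> nat \<Rightarrow> nat \<Rightarrow> nat" where
  "feng_rao G r m = Inf ((\<lambda>xs. card (Dlist G xs)) ` S_tuples G r m)"

definition u_bound :: "nat set \<Rightarrow> nat \<Rightarrow> nat" where
  "u_bound G m = max (m + multiplicity_ns G - 1) (conductor_ns G + multiplicity_ns G - 1)"

definition X_set :: "nat set \<Rightarrow> nat \<Rightarrow> nat list \<Rightarrow> nat set" where
  "X_set G m xs =
     (({last xs + 1 .. u_bound G m} \<inter> G) \<union> (\<lambda>a. a + multiplicity_ns G) ` set xs) - {0 .. last xs}"

primrec F_tuples :: "nat set \<Rightarrow> nat \<Rightarrow> nat \<Rightarrow> nat list set" where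
  "F_tuples G m 0 = {[]}"
| "F_tuples G m (Suc k) =
     (if k = 0 then {[a] | a. a \<in> {m .. u_bound G m} \<inter> G}
      else {xs @ [y] | xs y. xs \<in> F_tuples G m k \<and> y \<in> X_set G m xs})"

end

theory Submission
  imports Defs
begin

text \<open>Let \<open>e\<close> be the multiplicity and \<open>u\<close> the bound \<open>u_bound G m\<close>. For \<open>y \<ge> e\<close> we have
  \<open>D(y - e) \<subseteq> D(y)\<close>, because \<open>y - s = (y - e - s) + e\<close>. Given \<open>p \<in> S\<^sub>r(m)\<close>, choose among the
  tuples of \<open>S\<^sub>r(m)\<close> whose \<open>D\<close>-set lies inside \<open>D(p)\<close> one with least entry sum. If one of its
  entries \<open>y > u\<close> had \<open>y - e\<close> missing from the tuple, replacing \<open>y\<close> by \<open>y - e\<close> (which is at least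
  \<open>m\<close> and the conductor, hence in \<open>\<Gamma>\<close>) would keep the \<open>D\<close>-set inside \<open>D(p)\<close> and lower the sum.
  So the minimiser is closed under subtracting \<open>e\<close> above \<open>u\<close>, and such tuples lie in \<open>F\<^sub>r(m)\<close>:
  each entry is either at most \<open>u\<close> or an earlier entry plus \<open>e\<close>.\<close>

lemma numerical_semigroup_add_closed:
  assumes "numerical_semigroup G" "a \<in> G" "b \<in> G"
  shows "a + b \<in> G"
  using assms by (simp add: numerical_semigroup_def)

lemma conductor_ns_le_imp_in:
  assumes "numerical_semigroup G" "conductor_ns G \<le> n"
  shows "n \<in> G"
proof -
  have "finite (UNIV - G)" using assms(1) by (simp add: numerical_semigroup_def)
  then obtain k where "\<forall>n\<in>UNIV - G. n < k" using finite_nat_set_iff_bounded by blast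
  then have "\<forall>n. k \<le> n \<longrightarrow> n \<in> G" by (meson DiffI UNIV_I leD)
  then have "\<forall>n. conductor_ns G \<le> n \<longrightarrow> n \<in> G"
    unfolding conductor_ns_def by (rule LeastI)
  then show ?thesis using assms(2) by blast
qed

lemma multiplicity_ns_in:
  assumes "numerical_semigroup G"
  shows "multiplicity_ns G \<in> G" and "0 < multiplicity_ns G"
proof -
  have "0 < Suc (conductor_ns G) \<and> Suc (conductor_ns G) \<in> G"
    using conductor_ns_le_imp_in[OF assms] by simp
  then have "0 < multiplicity_ns G \<and> multiplicity_ns G \<in> G"
    unfolding multiplicity_ns_def by (rule LeastI)
  then show "multiplicity_ns G \<in> G" and "0 < multiplicity_ns G" by simp_all
qed

lemma sorted_wrt_less_le_last:
  assumes "sorted_wrt (<) (xs :: 'a :: linorder list)" "x \<in> set xs"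
  shows "x \<le> last xs"
proof -
  obtain ys y where "xs = ys @ [y]" using assms(2) by (cases xs rule: rev_exhaust) auto
  then show ?thesis using assms by (auto simp: sorted_wrt_append)
qed

lemma Dset_subset_Dset_add:
  assumes "numerical_semigroup G" "e \<in> G"
  shows "Dset G x \<subseteq> Dset G (x + e)"
proof
  fix s assume "s \<in> Dset G x"
  then have s: "s \<in> G" "s \<le> x" "x - s \<in> G" by (auto simp: Dset_def)
  have "x + e - s = (x - s) + e" using s(2) by simp
  then have "x + e - s \<in> G" using numerical_semigroup_add_closed[OF assms(1) s(3) assms(2)] by simp
  then show "s \<in> Dset G (x + e)" using s by (auto simp: Dset_def)
qed

lemma finite_Dlist: "finite (Dlist G xs)"
proof -
  have "Dset G x \<subseteq> {0..x}" for x by (auto simp: Dset_def)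
  then have "finite (Dset G x)" for x by (meson finite_atLeastAtMost finite_subset)
  then show ?thesis by (simp add: Dlist_def)
qed

lemma F_tuples_subset_S_tuples:
  assumes "numerical_semigroup G"
  shows "F_tuples G m (Suc k) \<subseteq> S_tuples G (Suc k) m"
proof (induction k)
  case 0
  then show ?case by (auto simp: S_tuples_def)
next
  case (Suc k)
  show ?case
  proof
    fix zs assume "zs \<in> F_tuples G m (Suc (Suc k))"
    then obtain xs y where zs: "zs = xs @ [y]" and xs: "xs \<in> F_tuples G m (Suc k)"
      and y: "y \<in> X_set G m xs" by auto
    have xsS: "xs \<in> S_tuples G (Suc k) m" using xs Suc by blast
    then have "xs \<noteq> []" "set xs \<subseteq> G" "sorted_wrt (<) xs" by (auto simp: S_tuples_def)
    have "last xs < y" using y by (auto simp: X_set_def)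
    then have below_y: "\<forall>x\<in>set xs. x < y"
      using sorted_wrt_less_le_last[OF \<open>sorted_wrt (<) xs\<close>] by fastforce
    have "y \<in> G"
      using y \<open>set xs \<subseteq> G\<close> multiplicity_ns_in(1)[OF assms]
      by (auto simp: X_set_def intro: numerical_semigroup_add_closed[OF assms])
    moreover have "m \<le> y"
      using xsS \<open>xs \<noteq> []\<close> \<open>last xs < y\<close> by (auto simp: S_tuples_def dest: bspec[OF _ last_in_set])
    ultimately show "zs \<in> S_tuples G (Suc (Suc k)) m"
      using xsS zs below_y by (auto simp: S_tuples_def sorted_wrt_append)
  qed
qed

lemma F_tuples_Suc_Suc:
  "F_tuples G m (Suc (Suc k)) = (\<lambda>(xs, y). xs @ [y]) ` (SIGMA xs:F_tuples G m (Suc k). X_set G m xs)"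
  by auto

lemma finite_F_tuples: "finite (F_tuples G m k)"
proof (induction k)
  case (Suc k)
  show ?case
  proof (cases k)
    case 0
    have "F_tuples G m (Suc 0) = (\<lambda>a. [a]) ` ({m .. u_bound G m} \<inter> G)" by auto
    then show ?thesis using 0 by simp
  next
    case (Suc j)
    have "finite (X_set G m xs)" for xs unfolding X_set_def by auto
    then show ?thesis
      unfolding \<open>k = Suc j\<close> F_tuples_Suc_Suc
      using Suc.IH \<open>k = Suc j\<close> by (intro finite_imageI finite_SigmaI) simp_all
  qed
qed simp

lemma F_tuples_nonempty:
  assumes "numerical_semigroup G" "m \<in> G"
  shows "F_tuples G m (Suc k) \<noteq> {}"
proof (induction k)
  case 0
  have "m \<le> u_bound G m" unfolding u_bound_def using multiplicity_ns_in(2)[OF assms(1)] by linarith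
  then show ?case using assms(2) by auto
next
  case (Suc k)
  then obtain xs where xs: "xs \<in> F_tuples G m (Suc k)" by blast
  then have "xs \<noteq> []" using F_tuples_subset_S_tuples[OF assms(1)] by (force simp: S_tuples_def)
  then have "last xs + multiplicity_ns G \<in> X_set G m xs"
    using multiplicity_ns_in(2)[OF assms(1)] by (auto simp: X_set_def)
  then show ?case unfolding F_tuples_Suc_Suc using xs by blast
qed

definition shift_closed :: "nat set \<Rightarrow> nat \<Rightarrow> nat list \<Rightarrow> bool" where
  "shift_closed G m xs \<longleftrightarrow> (\<forall>y\<in>set xs. u_bound G m < y \<longrightarrow> y - multiplicity_ns G \<in> set xs)"

lemma shift_closed_butlast:
  assumes "shift_closed G m (ys @ [y])" "\<forall>z\<in>set ys. z < y"
  shows "shift_closed G m ys"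
  unfolding shift_closed_def
proof (intro ballI impI)
  fix z assume z: "z \<in> set ys" "u_bound G m < z"
  then have "z - multiplicity_ns G \<in> set (ys @ [y])" using assms(1) by (auto simp: shift_closed_def)
  moreover have "z - multiplicity_ns G \<noteq> y" using assms(2) z(1) by fastforce
  ultimately show "z - multiplicity_ns G \<in> set ys" by auto
qed

lemma shift_closed_in_F_tuples:
  assumes "numerical_semigroup G" "xs \<in> S_tuples G (Suc k) m" "shift_closed G m xs"
  shows "xs \<in> F_tuples G m (Suc k)"
  using assms(2,3)
proof (induction k arbitrary: xs)
  case 0
  then obtain x where x: "xs = [x]" by (auto simp: S_tuples_def length_Suc_conv)
  have "x \<le> u_bound G m"
    using 0(2) multiplicity_ns_in(2)[OF assms(1)] by (auto simp: x shift_closed_def)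
  then show ?case using 0(1) x by (auto simp: S_tuples_def)
next
  case (Suc k)
  define e where "e = multiplicity_ns G"
  obtain ys y where xs: "xs = ys @ [y]"
    using Suc.prems(1) by (cases xs rule: rev_exhaust) (auto simp: S_tuples_def)
  have below_y: "\<forall>z\<in>set ys. z < y" and "y \<in> G"
    using Suc.prems(1) by (auto simp: S_tuples_def xs sorted_wrt_append)
  have ysS: "ys \<in> S_tuples G (Suc k) m"
    using Suc.prems(1) by (auto simp: S_tuples_def xs sorted_wrt_append)
  then have "ys \<noteq> []" by (auto simp: S_tuples_def)
  have ys_in_F: "ys \<in> F_tuples G m (Suc k)"
    using Suc.IH[OF ysS] shift_closed_butlast Suc.prems(2) below_y xs by blast
  have "last ys < y" using below_y \<open>ys \<noteq> []\<close> by simp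
  have y_in_X: "y \<in> X_set G m ys"
  proof (cases "y \<le> u_bound G m")
    case True
    then show ?thesis using \<open>y \<in> G\<close> \<open>last ys < y\<close> by (auto simp: X_set_def)
  next
    case False
    then have "e \<le> y" unfolding u_bound_def e_def by auto
    have "y - e \<in> set (ys @ [y])"
      using Suc.prems(2) False by (auto simp: xs shift_closed_def e_def)
    moreover have "y - e \<noteq> y" using multiplicity_ns_in(2)[OF assms(1)] \<open>e \<le> y\<close> False e_def by auto
    ultimately have "y \<in> (\<lambda>a. a + e) ` set ys" using \<open>e \<le> y\<close> by (auto intro: image_eqI[of y _ "y - e"])
    then show ?thesis using \<open>last ys < y\<close> by (auto simp: X_set_def e_def)
  qed
  show ?case
    unfolding xs F_tuples_Suc_Suc using ys_in_F y_in_X by (intro image_eqI[where x = "(ys, y)"]) auto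
qed

lemma sorted_list_of_set_in_S_tuples:
  assumes "finite A" "A \<subseteq> G" "\<forall>x\<in>A. m \<le> x"
  shows "sorted_list_of_set A \<in> S_tuples G (card A) m"
  using assms by (simp add: S_tuples_def)

lemma shift_down_entry:
  assumes "numerical_semigroup G" "q \<in> S_tuples G r m"
    and "y \<in> set q" "u_bound G m < y" "y - multiplicity_ns G \<notin> set q"
  obtains q' where "q' \<in> S_tuples G r m" "Dlist G q' \<subseteq> Dlist G q" "sum id (set q') < sum id (set q)"
proof -
  define e where "e = multiplicity_ns G"
  have "0 < e" "e \<in> G" using multiplicity_ns_in[OF assms(1)] by (simp_all add: e_def)
  have ge: "m + e \<le> y" "conductor_ns G + e \<le> y"
    using assms(4) \<open>0 < e\<close> unfolding u_bound_def e_def by auto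
  have q: "length q = r" "set q \<subseteq> G" "distinct q" "\<forall>x\<in>set q. m \<le> x"
    using assms(2) by (auto simp: S_tuples_def strict_sorted_iff)
  define A where "A = insert (y - e) (set q - {y})"
  have "finite A" by (simp add: A_def)
  have "card A = r"
    using assms(3,5) q(1,3) length_pos_if_in_set[OF assms(3)]
    by (auto simp: A_def e_def distinct_card card.insert_remove)
  moreover have "A \<subseteq> G"
    using q(2) conductor_ns_le_imp_in[OF assms(1)] ge(2) by (auto simp: A_def)
  moreover have "\<forall>x\<in>A. m \<le> x" using q(4) ge(1) by (auto simp: A_def)
  ultimately have in_S: "sorted_list_of_set A \<in> S_tuples G r m"
    using sorted_list_of_set_in_S_tuples[OF \<open>finite A\<close>] by simp
  have set_A: "set (sorted_list_of_set A) = A" using \<open>finite A\<close> by simp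
  have "Dset G (y - e) \<subseteq> Dset G y"
    using Dset_subset_Dset_add[OF assms(1) \<open>e \<in> G\<close>, of "y - e"] ge by simp
  then have "Dlist G (sorted_list_of_set A) \<subseteq> Dlist G q"
    using assms(3) unfolding Dlist_def set_A by (auto simp: A_def)
  moreover have "sum id A + e = sum id (set q)"
    using assms(3,5) ge \<open>0 < e\<close> by (simp add: A_def e_def sum.remove)
  then have "sum id (set (sorted_list_of_set A)) < sum id (set q)"
    using \<open>0 < e\<close> set_A by simp
  ultimately show thesis using that in_S by blast
qed

lemma shift_closed_reduction:
  assumes "numerical_semigroup G" "p \<in> S_tuples G r m"
  obtains q where "q \<in> S_tuples G r m" "shift_closed G m q" "Dlist G q \<subseteq> Dlist G p"
proof -
  let ?T = "\<lambda>q. q \<in> S_tuples G r m \<and> Dlist G q \<subseteq> Dlist G p"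
  obtain q where q: "?T q" and least: "\<And>q'. ?T q' \<Longrightarrow> sum id (set q) \<le> sum id (set q')"
    using ex_has_least_nat[of ?T p "\<lambda>q. sum id (set q)"] assms(2) by blast
  have "shift_closed G m q"
    unfolding shift_closed_def
  proof (intro ballI impI, rule ccontr)
    fix y assume "y \<in> set q" "u_bound G m < y" "y - multiplicity_ns G \<notin> set q"
    then obtain q' where "q' \<in> S_tuples G r m" "Dlist G q' \<subseteq> Dlist G q"
        "sum id (set q') < sum id (set q)"
      using shift_down_entry[OF assms(1)] q by blast
    then show False using least[of q'] q by fastforce
  qed
  then show thesis using that q by blast
qed

lemma F_tuples_card_Dlist_le:
  assumes "numerical_semigroup G" "p \<in> S_tuples G (Suc k) m"
  obtains q where "q \<in> F_tuples G m (Suc k)" "card (Dlist G q) \<le> card (Dlist G p)"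
proof -
  obtain q where "q \<in> S_tuples G (Suc k) m" "shift_closed G m q" "Dlist G q \<subseteq> Dlist G p"
    using shift_closed_reduction[OF assms] .
  then show thesis
    using that shift_closed_in_F_tuples[OF assms(1)] card_mono[OF finite_Dlist] by blast
qed

theorem proposition6p1:
  fixes G :: "nat set" and r m :: nat
  assumes "numerical_semigroup G" and "0 < r" and "m \<in> G"
  shows "finite (F_tuples G m r) \<and> F_tuples G m r \<subseteq> S_tuples G r m
         \<and> Min ((\<lambda>xs. card (Dlist G xs)) ` F_tuples G m r)
             = Inf ((\<lambda>xs. card (Dlist G xs)) ` S_tuples G r m)
         \<and> feng_rao G r m = Min ((\<lambda>xs. card (Dlist G xs)) ` F_tuples G m r)"
proof -
  obtain k where r: "r = Suc k" using assms(2) by (cases r) auto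
  let ?f = "\<lambda>xs. card (Dlist G xs)"
  have fin: "finite (F_tuples G m r)" by (rule finite_F_tuples)
  have ne: "F_tuples G m r \<noteq> {}" using F_tuples_nonempty[OF assms(1,3)] r by simp
  have sub: "F_tuples G m r \<subseteq> S_tuples G r m" using F_tuples_subset_S_tuples[OF assms(1)] r by simp
  have "Inf (?f ` S_tuples G r m) = Min (?f ` F_tuples G m r)"
  proof (rule cInf_eq_minimum)
    show "Min (?f ` F_tuples G m r) \<in> ?f ` S_tuples G r m"
      using Min_in[of "?f ` F_tuples G m r"] fin ne sub by blast
  next
    fix x assume "x \<in> ?f ` S_tuples G r m"
    then obtain p where "p \<in> S_tuples G r m" "x = ?f p" by blast
    then obtain q where "q \<in> F_tuples G m r" "?f q \<le> x"
      using F_tuples_card_Dlist_le[OF assms(1)] r by metis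
    then show "Min (?f ` F_tuples G m r) \<le> x" using fin by (meson Min_le finite_imageI image_eqI order_trans)
  qed
  then show ?thesis using fin sub by (simp add: feng_rao_def)
qed

end
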